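(* Let $\mathcal{C}\subseteq\mathbb{F}_q^n$ be a GQC code with orbit lengths $l_1,\dots,l_m$, and let $\mathcal{C}^\perp$ be its dual code. Let $\mathcal{G}=\{g_1,\dots,g_m\}$ be a Gröbner basis of $\overline{\mathcal{C}}$ and $\mathcal{H}=\{h_1,\dots,h_m\}$ a Gröbner basis of $\overline{\mathcal{C}^\perp}$, both with respect to an arbitrary monomial ordering on $\mathbb{F}_q[t]^m$, and regard their elements as elements of $M$ via $\pi$. Then for all $1\le i,j\le m$, $\langle g_i,h_j\rangle\equiv\langle h_j,g_i\rangle\equiv 0 \pmod{t^{l}-1}$, where $l$ is the modulus appearing in the definition of each respective scalar product.
   Context: Let $q$ be a prime power. A linear code $\mathcal{C}\subseteq\mathbb{F}_q^n$ is a generalized quasi-cyclic (GQC) code with orbit lengths $l_1,\dots,l_m$ ($m<n$, $l_1+\dots+l_m=n$) if, writing each codeword as $c=(c_1,\dots,c_m)$ with blocks $c_i=(c_{i,0},\dots,c_{i,l_i-1})$ of length $l_i$, $\mathcal{C}$ is closed under the simultaneous local cyclic shift $\sigma$ sending each block $c_i$ to $(c_{i,l_i-1},c_{i,0},\dots,c_{i,l_i-2})$. Identify $c$ with $(c_1(t),\dots,c_m(t))\in M:=\bigoplus_{i=1}^m\mathbb{F}_q[t]/(t^{l_i}-1)$, where $c_i(t)=\sum_{j=0}^{l_i-1}c_{i,j}t^j$; then $\sigma$ is multiplication by $t$ and $\mathcal{C}$ is an $\mathbb{F}_q[t]$-submodule of $M$. Elements of $\mathbb{F}_q[t]/(t^{l_i}-1)$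 are identified with their representatives of degree $<l_i$. Let $\pi:\mathbb{F}_q[t]^m\to M$ be the natural projection and $\overline{\mathcal{C}}:=\pi^{-1}(\mathcal{C})$, a submodule of $\mathbb{F}_q[t]^m$. The dual code $\mathcal{C}^\perp$ (with respect to the standard bilinear form on $\mathbb{F}_q^n$) is again GQC with the same orbit lengths, and $\overline{\mathcal{C}^\perp}:=\pi^{-1}(\mathcal{C}^\perp)$. For $a(t)=\sum_{j=0}^{l-1}a_jt^j\in\mathbb{F}_q[t]/(t^l-1)$ put $\widehat{a}(t):=a_0+a_{l-1}t+\dots+a_1t^{l-1}$. For $u=(u_1,\dots,u_m),v=(v_1,\dots,v_m)\in M$ define the scalar product $\langle u,v\rangle:=\sum_{i=1}^m u_i(t)\widehat{v}_i(t)\sum_{k=0}^{l/l_i-1}t^{kl_i}\bmod (t^l-1)$, where $\widehat{v}_i$ is computed in $\mathbb{F}_q[t]/(t^{l_i}-1)$ and $l$ is the least common multiple of those $l_i$ for which both $u_i$ and $v_i$ are nonzero. *)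

theory Defs
  imports "HOL-Computational_Algebra.Polynomial"
begin

text \<open>Elements of F_q[t]^m are modelled as functions u :: nat => 'a poly vanishing
  at indices >= m; elements of M = (+)_i F_q[t]/(t^{l_i}-1) as such functions whose
  i-th component has degree < l_i (canonical representatives). A codeword
  c = (c_1,...,c_m) of F_q^n is identified with its element of M: the coefficient
  of t^j in the i-th component is c_{i,j}.\<close>

definition orbit_lengths :: "nat \<Rightarrow> (nat \<Rightarrow> nat) \<Rightarrow> nat \<Rightarrow> bool" where
  "orbit_lengths m l n \<longleftrightarrow> m < n \<and> (\<forall>i<m. 0 < l i) \<and> (\<Sum>i<m. l i) = n"

definition M_space :: "nat \<Rightarrow> (nat \<Rightarrow> nat) \<Rightarrow> (nat \<Rightarrow> 'a::field poly) set" where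
  "M_space m l = {u. (\<forall>i<m. u i = 0 \<or> degree (u i) < l i) \<and> (\<forall>i\<ge>m. u i = 0)}"

definition free_mod :: "nat \<Rightarrow> (nat \<Rightarrow> 'a::field poly) set" where
  "free_mod m = {p. \<forall>i\<ge>m. p i = 0}"

definition tpm1 :: "nat \<Rightarrow> 'a::field poly" where
  "tpm1 k = monom 1 k - 1"

definition linear_code :: "nat \<Rightarrow> (nat \<Rightarrow> nat) \<Rightarrow> (nat \<Rightarrow> 'a::field poly) set \<Rightarrow> bool" where
  "linear_code m l C \<longleftrightarrow> C \<subseteq> M_space m l \<and> (\<lambda>_. 0) \<in> C \<and>
     (\<forall>u\<in>C. \<forall>v\<in>C. (\<lambda>i. u i + v i) \<in> C) \<and>
     (\<forall>a. \<forall>u\<in>C. (\<lambda>i. smult a (u i)) \<in> C)"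

definition loc_shift :: "nat \<Rightarrow> (nat \<Rightarrow> nat) \<Rightarrow> (nat \<Rightarrow> 'a::field poly) \<Rightarrow> (nat \<Rightarrow> 'a poly)" where
  "loc_shift m l u = (\<lambda>i. if i < m then (monom 1 1 * u i) mod tpm1 (l i) else 0)"

definition GQC :: "nat \<Rightarrow> (nat \<Rightarrow> nat) \<Rightarrow> nat \<Rightarrow> (nat \<Rightarrow> 'a::field poly) set \<Rightarrow> bool" where
  "GQC m l n C \<longleftrightarrow> orbit_lengths m l n \<and> linear_code m l C \<and> (\<forall>u\<in>C. loc_shift m l u \<in> C)"

definition std_bil :: "nat \<Rightarrow> (nat \<Rightarrow> nat) \<Rightarrow> (nat \<Rightarrow> 'a::field poly) \<Rightarrow> (nat \<Rightarrow> 'a poly) \<Rightarrow> 'a" where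
  "std_bil m l u v = (\<Sum>i<m. \<Sum>j<l i. coeff (u i) j * coeff (v i) j)"

definition dual_code :: "nat \<Rightarrow> (nat \<Rightarrow> nat) \<Rightarrow> (nat \<Rightarrow> 'a::field poly) set \<Rightarrow> (nat \<Rightarrow> 'a poly) set" where
  "dual_code m l C = {v \<in> M_space m l. \<forall>u\<in>C. std_bil m l u v = 0}"

definition proj :: "nat \<Rightarrow> (nat \<Rightarrow> nat) \<Rightarrow> (nat \<Rightarrow> 'a::field poly) \<Rightarrow> (nat \<Rightarrow> 'a poly)" where
  "proj m l p = (\<lambda>i. if i < m then p i mod tpm1 (l i) else 0)"

definition lift_code :: "nat \<Rightarrow> (nat \<Rightarrow> nat) \<Rightarrow> (nat \<Rightarrow> 'a::field poly) set \<Rightarrow> (nat \<Rightarrow> 'a poly) set" where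
  "lift_code m l C = {p \<in> free_mod m. proj m l p \<in> C}"

text \<open>Monomials of F_q[t]^m: t^k e_i is represented by the pair (k, i), i < m.\<close>
definition monomial_order :: "nat \<Rightarrow> (nat \<times> nat \<Rightarrow> nat \<times> nat \<Rightarrow> bool) \<Rightarrow> bool" where
  "monomial_order m mord \<longleftrightarrow>
     (\<forall>x. \<not> mord x x) \<and>
     (\<forall>x y z. mord x y \<longrightarrow> mord y z \<longrightarrow> mord x z) \<and>
     (\<forall>a i b j. i < m \<longrightarrow> j < m \<longrightarrow> (a, i) \<noteq> (b, j) \<longrightarrow> mord (a, i) (b, j) \<or> mord (b, j) (a, i)) \<and>
     (\<forall>a i c. i < m \<longrightarrow> 0 < c \<longrightarrow> mord (a, i) (a + c, i)) \<and>
     (\<forall>a i b j c. i < m \<longrightarrow> j < m \<longrightarrow> mord (a, i) (b, j) \<longrightarrow> mord (a + c, i) (b + c, j))"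

definition mon_supp :: "nat \<Rightarrow> (nat \<Rightarrow> 'a::field poly) \<Rightarrow> (nat \<times> nat) set" where
  "mon_supp m f = {(k, i). i < m \<and> coeff (f i) k \<noteq> 0}"

definition lead_mon :: "nat \<Rightarrow> (nat \<times> nat \<Rightarrow> nat \<times> nat \<Rightarrow> bool) \<Rightarrow> (nat \<Rightarrow> 'a::field poly) \<Rightarrow> nat \<times> nat" where
  "lead_mon m mord f = (THE x. x \<in> mon_supp m f \<and> (\<forall>y\<in>mon_supp m f. y \<noteq> x \<longrightarrow> mord y x))"

definition mon_dvd :: "nat \<times> nat \<Rightarrow> nat \<times> nat \<Rightarrow> bool" where
  "mon_dvd x y \<longleftrightarrow> snd x = snd y \<and> fst x \<le> fst y"

definition groebner_basis :: "nat \<Rightarrow> (nat \<times> nat \<Rightarrow> nat \<times> nat \<Rightarrow> bool) \<Rightarrow> (nat \<Rightarrow> 'a::field poly) set \<Rightarrow> (nat \<Rightarrow> 'a poly) set \<Rightarrow> bool" where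
  "groebner_basis m mord G N \<longleftrightarrow> G \<subseteq> N \<and> N \<subseteq> free_mod m \<and>
     (\<forall>f\<in>N. f \<noteq> (\<lambda>_. 0) \<longrightarrow> (\<exists>g\<in>G. g \<noteq> (\<lambda>_. 0) \<and> mon_dvd (lead_mon m mord g) (lead_mon m mord f)))"

definition hat :: "nat \<Rightarrow> 'a::field poly \<Rightarrow> 'a poly" where
  "hat L a = (\<Sum>j<L. monom (coeff a ((L - j) mod L)) j)"

definition scal :: "nat \<Rightarrow> (nat \<Rightarrow> nat) \<Rightarrow> (nat \<Rightarrow> 'a::field poly) \<Rightarrow> (nat \<Rightarrow> 'a poly) \<Rightarrow> 'a poly" where
  "scal m l u v =
    (let L = Lcm {l i | i. i < m \<and> u i \<noteq> 0 \<and> v i \<noteq> 0}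
     in (\<Sum>i<m. u i * hat (l i) (v i) * (\<Sum>k<L div l i. monom 1 (k * l i))) mod tpm1 L)"

end

theory Submission
  imports Defs
begin

text \<open>Modulo t^l_i - 1, the product u_i * hat v_i is the polynomial whose coefficient of t^r
  is the cyclic correlation sum_a u_{i,a} v_{i,a-r}, and the factor sum_k t^(k l_i) repeats these
  coefficients periodically up to degree l. Hence <u,v> = 0 as soon as, for every shift r, the
  correlations summed over all blocks vanish. For u in C and v in the dual code that sum is the
  standard inner product of sigma^r u (again in C) with v; the other order follows because
  correlation is symmetric under r |-> -r.\<close>

text \<open>A residue modulo t^L - 1 read as an L-periodic coefficient sequence on the integers.\<close>

definition cyc_coeff :: "nat \<Rightarrow> 'a::zero poly \<Rightarrow> int \<Rightarrow> 'a" where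
  "cyc_coeff L p x = coeff p (nat (x mod int L))"

definition cyc_corr :: "nat \<Rightarrow> 'a::comm_semiring_1 poly \<Rightarrow> 'a poly \<Rightarrow> int \<Rightarrow> 'a" where
  "cyc_corr L p q x = (\<Sum>a<L. coeff p a * cyc_coeff L q (int a - x))"

definition cyc_corr_poly :: "nat \<Rightarrow> 'a::comm_semiring_1 poly \<Rightarrow> 'a poly \<Rightarrow> 'a poly" where
  "cyc_corr_poly L p q = (\<Sum>r<L. monom (cyc_corr L p q (int r)) r)"

lemma cyc_coeff_cong: "x mod int L = y mod int L \<Longrightarrow> cyc_coeff L p x = cyc_coeff L p y"
  by (simp add: cyc_coeff_def)

lemma cyc_coeff_of_nat [simp]: "a < L \<Longrightarrow> cyc_coeff L p (int a) = coeff p a"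
  by (simp add: cyc_coeff_def)

lemma cyc_coeff_0 [simp]: "cyc_coeff L 0 x = 0"
  by (simp add: cyc_coeff_def)

lemma cyc_corr_cong: "x mod int L = y mod int L \<Longrightarrow> cyc_corr L p q x = cyc_corr L p q y"
  unfolding cyc_corr_def
  by (intro sum.cong refl arg_cong2[where f="(*)"] cyc_coeff_cong) (metis mod_diff_right_eq)

lemma sum_lessThan_shift_periodic:
  fixes F :: "int \<Rightarrow> 'b::comm_monoid_add"
  assumes L: "0 < L" and per: "\<And>x. F (x mod int L) = F x"
  shows "(\<Sum>a<L. F (int a + k)) = (\<Sum>a<L. F (int a))"
proof (rule sum.reindex_bij_witness[where i="\<lambda>b. nat ((int b - k) mod int L)"
                                     and j="\<lambda>a. nat ((int a + k) mod int L)"])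
  fix a assume a: "a \<in> {..<L}"
  have "((int a + k) mod int L - k) mod int L = (int a + k - k) mod int L"
    by (rule mod_diff_left_eq)
  also have "\<dots> = int a" using a by simp
  finally show "nat ((int (nat ((int a + k) mod int L)) - k) mod int L) = a"
    using L by simp
  show "nat ((int a + k) mod int L) \<in> {..<L}" using L
    by (simp add: nat_less_iff)
  show "F (int (nat ((int a + k) mod int L))) = F (int a + k)"
    using L per by simp
next
  fix b assume b: "b \<in> {..<L}"
  show "nat ((int b - k) mod int L) \<in> {..<L}" using L by (simp add: nat_less_iff)
  have "((int b - k) mod int L + k) mod int L = (int b - k + k) mod int L"
    by (rule mod_add_left_eq)
  also have "\<dots> = int b" using b by simp
  finally show "nat ((int (nat ((int b - k) mod int L)) + k) mod int L) = b"
    using L by simp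
qed

lemma cyc_corr_commute:
  assumes "0 < L"
  shows "cyc_corr L p q x = cyc_corr L q p (- x)"
proof -
  define F where "F y = cyc_coeff L p y * cyc_coeff L q (y - x)" for y
  have per: "F (y mod int L) = F y" for y
    unfolding F_def by (intro arg_cong2[where f="(*)"] cyc_coeff_cong) (simp_all add: mod_diff_left_eq)
  have "cyc_corr L p q x = (\<Sum>a<L. F (int a))"
    by (simp add: cyc_corr_def F_def)
  also have "\<dots> = (\<Sum>a<L. F (int a + x))"
    by (rule sum_lessThan_shift_periodic[where F=F, OF assms per, symmetric])
  also have "\<dots> = cyc_corr L q p (- x)"
    by (simp add: cyc_corr_def F_def mult.commute)
  finally show ?thesis .
qed

lemma tpm1_factor: "tpm1 (L * q) = (tpm1 L :: 'a::field poly) * (\<Sum>k<q. monom 1 (k * L))"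
proof -
  have "tpm1 (L * q) = (monom (1::'a) L) ^ q - 1" by (simp add: tpm1_def monom_power)
  also have "\<dots> = (monom 1 L - 1) * (\<Sum>i<q. (monom 1 L) ^ i)" by (rule power_diff_1_eq)
  finally show ?thesis by (simp add: tpm1_def monom_power mult.commute)
qed

lemma tpm1_dvd_monom_diff_mod: "(tpm1 L :: 'a::field poly) dvd monom c k - monom c (k mod L)"
proof -
  have "monom c k - monom c (k mod L) = monom c (k mod L) * tpm1 (L * (k div L))"
    by (simp add: tpm1_def mult_monom algebra_simps)
  moreover have "tpm1 L dvd (tpm1 (L * (k div L)) :: 'a poly)"
    by (simp add: tpm1_factor)
  ultimately show ?thesis by (simp add: dvd_mult)
qed

lemma degree_tpm1: "0 < L \<Longrightarrow> degree (tpm1 L :: 'a::field poly) = L"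
proof -
  assume L: "0 < L"
  have "degree (monom (1::'a) L + (- 1)) = L"
    using L by (subst degree_add_eq_left) (auto simp: degree_monom_eq)
  then show ?thesis by (simp add: tpm1_def)
qed

lemma poly_mod_tpm1_eqI:
  fixes p r :: "'a::field poly"
  assumes "0 < L" "degree r < L \<or> r = 0" "tpm1 L dvd p - r"
  shows "p mod tpm1 L = r"
proof -
  have "r mod tpm1 L = r" using assms(1,2) by (auto intro: mod_poly_less simp: degree_tpm1)
  moreover have "p mod tpm1 L = r mod tpm1 L" using assms(3) by (simp add: mod_eq_dvd_iff)
  ultimately show ?thesis by simp
qed

lemma degree_sum_monom_lessThan:
  assumes "0 < L"
  shows "degree (\<Sum>r<L. monom (c r) r) < L"
proof -
  have "degree (\<Sum>r<L. monom (c r) r) \<le> L - 1"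
    by (rule degree_sum_le) (auto simp: degree_monom_le intro: le_trans[OF degree_monom_le])
  with assms show ?thesis by linarith
qed

lemma poly_eq_sum_monom_coeff:
  assumes "\<And>a. a \<ge> L \<Longrightarrow> coeff p a = 0"
  shows "p = (\<Sum>a<L. monom (coeff p a) a)"
proof (rule poly_eqI)
  fix n
  show "coeff p n = coeff (\<Sum>a<L. monom (coeff p a) a) n"
    using assms[of n] by (cases "n < L") (simp_all add: coeff_sum coeff_monom)
qed

lemma tpm1_dvd_sum_monom_shift:
  fixes F :: "int \<Rightarrow> 'a::field"
  assumes L: "0 < L" and per: "\<And>x. F (x mod int L) = F x"
  shows "tpm1 L dvd (\<Sum>a<L. monom (F (int a)) (a + k)) - (\<Sum>r<L. monom (F (int r - int k)) r)"
proof -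
  have "tpm1 L dvd (\<Sum>a<L. monom (F (int a)) (a + k)) - (\<Sum>a<L. monom (F (int a)) ((a + k) mod L))"
    unfolding sum_subtractf[symmetric] by (intro dvd_sum tpm1_dvd_monom_diff_mod)
  moreover have "(\<Sum>a<L. monom (F (int a)) ((a + k) mod L)) = (\<Sum>r<L. monom (F (int r - int k)) r)"
  proof -
    define G where "G x = monom (F (x - int k)) (nat (x mod int L))" for x
    have "G (x mod int L) = G x" for x
      unfolding G_def by (metis per mod_diff_left_eq mod_mod_trivial)
    then have "(\<Sum>a<L. G (int a + int k)) = (\<Sum>a<L. G (int a))"
      by (rule sum_lessThan_shift_periodic[OF L])
    then show ?thesis by (simp add: G_def nat_mod_as_int)
  qed
  ultimately show ?thesis by simp
qed

lemma hat_as_sum_monom: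
  assumes "0 < L"
  shows "hat L v = (\<Sum>b<L. monom (cyc_coeff L v (- int b)) b)"
  unfolding hat_def
proof (rule sum.cong[OF refl])
  fix b assume "b \<in> {..<L}"
  then have "int ((L - b) mod L) = (- int b) mod int L"
    by (simp add: of_nat_mod of_nat_diff mod_diff_left_eq[symmetric])
  then have "(L - b) mod L = nat ((- int b) mod int L)"
    by linarith
  then show "monom (coeff v ((L - b) mod L)) b = monom (cyc_coeff L v (- int b)) b"
    by (simp add: cyc_coeff_def)
qed

lemma mult_hat_cong:
  fixes u v :: "'a::field poly"
  assumes L: "0 < L" and u: "\<And>a. a \<ge> L \<Longrightarrow> coeff u a = 0"
  shows "tpm1 L dvd u * hat L v - cyc_corr_poly L u v"
proof -
  define F where "F a y = coeff u a * cyc_coeff L v (- y)" for a y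
  have per: "F a (y mod int L) = F a y" for a y
    unfolding F_def by (intro arg_cong2[where f="(*)"] cyc_coeff_cong refl) (simp add: mod_minus_eq)
  have hu: "(\<Sum>a<L. monom (coeff u a) a) = u"
    by (rule poly_eq_sum_monom_coeff[OF u, symmetric])
  have "u * hat L v = (\<Sum>a<L. monom (coeff u a) a) * (\<Sum>b<L. monom (cyc_coeff L v (- int b)) b)"
    by (simp only: hu hat_as_sum_monom[OF L])
  also have "\<dots> = (\<Sum>a<L. \<Sum>b<L. monom (F a (int b)) (b + a))"
    by (simp add: sum_product mult_monom F_def add.commute)
  finally have "u * hat L v = \<dots>" .
  moreover have "tpm1 L dvd (\<Sum>a<L. \<Sum>b<L. monom (F a (int b)) (b + a))
                          - (\<Sum>a<L. \<Sum>r<L. monom (F a (int r - int a)) r)"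
  proof -
    have "tpm1 L dvd (\<Sum>b<L. monom (F a (int b)) (b + a)) - (\<Sum>r<L. monom (F a (int r - int a)) r)"
      for a by (rule tpm1_dvd_sum_monom_shift[where F="F a", OF L per])
    then show ?thesis
      unfolding sum_subtractf[symmetric] by (rule dvd_sum)
  qed
  moreover have "(\<Sum>a<L. \<Sum>r<L. monom (F a (int r - int a)) r) = cyc_corr_poly L u v"
    by (subst sum.swap) (simp add: cyc_corr_poly_def cyc_corr_def F_def monom_sum)
  ultimately show ?thesis by simp
qed

lemma coeff_sum_monom_mult_fold:
  fixes c :: "nat \<Rightarrow> 'a::comm_semiring_1"
  assumes l: "0 < l"
  shows "coeff ((\<Sum>r<l. monom (c r) r) * (\<Sum>k<q. monom 1 (k * l))) n
           = (if n < l * q then c (n mod l) else 0)"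
proof -
  have "coeff ((\<Sum>r<l. monom (c r) r) * (\<Sum>k<q. monom 1 (k * l))) n
          = (\<Sum>r<l. \<Sum>k<q. if r + k * l = n then c r else 0)"
    by (simp add: sum_product mult_monom coeff_sum coeff_monom)
  also have "\<dots> = (\<Sum>r<l. if r = n mod l then \<Sum>k<q. if k = n div l then c r else 0 else 0)"
  proof (intro sum.cong refl)
    fix r assume "r \<in> {..<l}"
    then have "r + k * l = n \<longleftrightarrow> r = n mod l \<and> k = n div l" for k
      using l by auto
    then show "(\<Sum>k<q. if r + k * l = n then c r else 0)
                 = (if r = n mod l then \<Sum>k<q. if k = n div l then c r else 0 else 0)"
      by simp
  qed
  also have "\<dots> = (if n div l < q then c (n mod l) else 0)"
    using l by simp
  also have "n div l < q \<longleftrightarrow> n < l * q"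
    using l by (simp add: div_less_iff_less_mult mult.commute)
  finally show ?thesis .
qed

lemma cyc_corr_poly_0_left [simp]: "cyc_corr_poly L 0 q = 0"
  and cyc_corr_poly_0_right [simp]: "cyc_corr_poly L p 0 = 0"
  by (simp_all add: cyc_corr_poly_def cyc_corr_def)

lemma M_space_coeff_eq_0: "u \<in> M_space m l \<Longrightarrow> i < m \<Longrightarrow> l i \<le> a \<Longrightarrow> coeff (u i) a = 0"
  unfolding M_space_def by (cases "u i = 0") (auto intro!: coeff_eq_0)

lemma scal_eq_0_if_cyc_corr_eq_0:
  fixes u v :: "nat \<Rightarrow> 'a::field poly"
  assumes pos: "\<forall>i<m. 0 < l i" and uM: "u \<in> M_space m l"
    and crit: "\<And>n. (\<Sum>i<m. cyc_corr (l i) (u i) (v i) (int n)) = 0"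
  shows "scal m l u v = 0"
proof -
  define A where "A = {l i | i. i < m \<and> u i \<noteq> 0 \<and> v i \<noteq> 0}"
  define L where "L = Lcm A"
  define S where "S i = (\<Sum>k<L div l i. monom (1::'a) (k * l i))" for i
  define R where "R i = cyc_corr_poly (l i) (u i) (v i)" for i
  have dvd_L: "l i dvd L" if "i < m" "u i \<noteq> 0" "v i \<noteq> 0" for i
    unfolding L_def A_def using that by (auto intro: dvd_Lcm)
  have "tpm1 L dvd u i * hat (l i) (v i) * S i - R i * S i" if i: "i < m" for i
  proof (cases "u i = 0 \<or> v i = 0")
    case False
    then have "tpm1 L = tpm1 (l i) * S i"
      using tpm1_factor[of "l i" "L div l i"] dvd_L[OF i] by (simp add: S_def)
    moreover have "tpm1 (l i) dvd u i * hat (l i) (v i) - R i"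
      unfolding R_def using pos i by (intro mult_hat_cong M_space_coeff_eq_0[OF uM]) auto
    ultimately show ?thesis
      by (simp add: left_diff_distrib[symmetric] mult_dvd_mono)
  qed (auto simp: R_def hat_def)
  then have "tpm1 L dvd (\<Sum>i<m. u i * hat (l i) (v i) * S i) - (\<Sum>i<m. R i * S i)"
    unfolding sum_subtractf[symmetric] by (intro dvd_sum) simp
  moreover have "(\<Sum>i<m. R i * S i) = 0"
  proof (rule poly_eqI)
    fix n
    have "coeff (R i * S i) n = (if n < L then cyc_corr (l i) (u i) (v i) (int n) else 0)"
      if i: "i < m" for i
    proof (cases "u i = 0 \<or> v i = 0")
      case False
      have "cyc_corr (l i) (u i) (v i) (int (n mod l i)) = cyc_corr (l i) (u i) (v i) (int n)"
        by (rule cyc_corr_cong) (simp add: of_nat_mod)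
      then show ?thesis
        using coeff_sum_monom_mult_fold[of "l i" "\<lambda>r. cyc_corr (l i) (u i) (v i) (int r)" "L div l i" n]
          pos i dvd_L[OF i] False
        by (simp add: R_def S_def cyc_corr_poly_def)
    qed (auto simp: R_def cyc_corr_def)
    then show "coeff (\<Sum>i<m. R i * S i) n = coeff 0 n"
      using crit[of n] by (cases "n < L") (simp_all add: coeff_sum)
  qed
  ultimately show ?thesis
    by (simp add: scal_def Let_def A_def[symmetric] L_def[symmetric] S_def[symmetric] dvd_imp_mod_0)
qed

lemma monom_mult_mod_tpm1:
  fixes p :: "'a::field poly"
  assumes L: "0 < L" and p: "\<And>a. a \<ge> L \<Longrightarrow> coeff p a = 0"
  shows "(monom 1 s * p) mod tpm1 L = (\<Sum>b<L. monom (cyc_coeff L p (int b - int s)) b)"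
proof (rule poly_mod_tpm1_eqI[OF L])
  show "degree (\<Sum>b<L. monom (cyc_coeff L p (int b - int s)) b) < L \<or>
        (\<Sum>b<L. monom (cyc_coeff L p (int b - int s)) b) = 0"
    by (rule disjI1, rule degree_sum_monom_lessThan[OF L])
  have hp: "(\<Sum>a<L. monom (coeff p a) a) = p"
    by (rule poly_eq_sum_monom_coeff[OF p, symmetric])
  have "monom 1 s * p = (\<Sum>a<L. monom (coeff p a) (a + s))"
    by (subst hp[symmetric]) (simp add: sum_distrib_left mult_monom add.commute)
  also have "\<dots> = (\<Sum>a<L. monom (cyc_coeff L p (int a)) (a + s))"
    by (intro sum.cong refl) simp
  finally show "tpm1 L dvd monom 1 s * p - (\<Sum>b<L. monom (cyc_coeff L p (int b - int s)) b)"
    using tpm1_dvd_sum_monom_shift[of L "cyc_coeff L p" s] L by (simp add: cyc_coeff_def)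
qed

lemma loc_shift_pow_eq:
  assumes i: "i < m" and l: "0 < l i" and u: "\<And>a. a \<ge> l i \<Longrightarrow> coeff (u i) a = 0"
  shows "(loc_shift m l ^^ s) u i = (monom 1 s * u i) mod tpm1 (l i)"
proof (induction s)
  case 0
  have "u i = (\<Sum>a<l i. monom (coeff (u i) a) a)"
    by (rule poly_eq_sum_monom_coeff[OF u])
  then have "degree (u i) < l i"
    using degree_sum_monom_lessThan[OF l] by metis
  then show ?case
    using l by (simp add: mod_poly_less degree_tpm1)
next
  case (Suc s)
  then show ?case
    using i by (simp add: loc_shift_def mod_mult_right_eq mult_monom flip: mult.assoc)
qed

lemma coeff_loc_shift_pow:
  assumes pos: "\<forall>i<m. 0 < l i" and uM: "u \<in> M_space m l" and i: "i < m" and b: "b < l i"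
  shows "coeff ((loc_shift m l ^^ s) u i) b = cyc_coeff (l i) (u i) (int b - int s)"
proof -
  have l: "0 < l i" using pos i by simp
  note u = M_space_coeff_eq_0[OF uM i]
  show ?thesis
    using b by (simp add: loc_shift_pow_eq[where m=m and l=l and u=u, OF i l u] monom_mult_mod_tpm1[OF l u] coeff_sum coeff_monom)
qed

lemma std_bil_loc_shift_pow:
  assumes pos: "\<forall>i<m. 0 < l i" and uM: "u \<in> M_space m l"
  shows "std_bil m l ((loc_shift m l ^^ s) u) v = (\<Sum>i<m. cyc_corr (l i) (v i) (u i) (int s))"
  unfolding std_bil_def cyc_corr_def
  by (intro sum.cong refl) (simp add: coeff_loc_shift_pow[OF pos uM] mult.commute)

lemma GQC_loc_shift_pow_mem:
  assumes "GQC m l n C" "u \<in> C"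
  shows "(loc_shift m l ^^ s) u \<in> C"
  using assms by (induction s) (auto simp: GQC_def)

lemma GQC_sum_cyc_corr_dual_eq_0:
  assumes G: "GQC m l n C" and u: "u \<in> C" and v: "v \<in> dual_code m l C"
  shows "(\<Sum>i<m. cyc_corr (l i) (v i) (u i) x) = 0"
proof -
  have pos: "\<forall>i<m. 0 < l i" and uM: "u \<in> M_space m l"
    using G u by (auto simp: GQC_def orbit_lengths_def linear_code_def)
  \<comment> \<open>a possibly negative shift x is realised by sigma^s with s = x modulo every l_i\<close>
  define P where "P = (\<Prod>i<m. l i)"
  define s where "s = nat (x mod int P)"
  have "0 < P"
    unfolding P_def using pos by (simp add: prod_pos)
  then have s: "int s = x mod int P"
    by (simp add: s_def)
  have "cyc_corr (l i) (v i) (u i) x = cyc_corr (l i) (v i) (u i) (int s)" if "i < m" for i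
  proof (rule cyc_corr_cong)
    have "l i dvd P"
      unfolding P_def using that by (intro dvd_prodI) auto
    then show "x mod int (l i) = int s mod int (l i)"
      by (simp add: s mod_mod_cancel)
  qed
  then have "(\<Sum>i<m. cyc_corr (l i) (v i) (u i) x) = std_bil m l ((loc_shift m l ^^ s) u) v"
    by (simp add: std_bil_loc_shift_pow[OF pos uM])
  also have "\<dots> = 0"
    using v GQC_loc_shift_pow_mem[OF G u] by (simp add: dual_code_def)
  finally show ?thesis .
qed

lemma GQC_scal_dual_eq_0:
  assumes G: "GQC m l n C" and u: "u \<in> C" and v: "v \<in> dual_code m l C"
  shows "scal m l u v = 0" and "scal m l v u = 0"
proof -
  have pos: "\<forall>i<m. 0 < l i"
    using G by (simp add: GQC_def orbit_lengths_def)
  have uM: "u \<in> M_space m l" and vM: "v \<in> M_space m l"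
    using G u v by (auto simp: GQC_def linear_code_def dual_code_def)
  show "scal m l v u = 0"
    using scal_eq_0_if_cyc_corr_eq_0[OF pos vM] GQC_sum_cyc_corr_dual_eq_0[OF G u v] by blast
  have "(\<Sum>i<m. cyc_corr (l i) (u i) (v i) x) = (\<Sum>i<m. cyc_corr (l i) (v i) (u i) (- x))" for x
    using pos by (intro sum.cong refl cyc_corr_commute) simp
  then show "scal m l u v = 0"
    using scal_eq_0_if_cyc_corr_eq_0[OF pos uM] GQC_sum_cyc_corr_dual_eq_0[OF G u v] by simp
qed

theorem theorem1:
  fixes C :: "(nat \<Rightarrow> 'a::{finite,field} poly) set"
    and m n :: nat and l :: "nat \<Rightarrow> nat"
    and mord :: "nat \<times> nat \<Rightarrow> nat \<times> nat \<Rightarrow> bool"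
    and g h :: "nat \<Rightarrow> nat \<Rightarrow> 'a poly"
    and i j :: nat
  assumes "GQC m l n C"
    and "monomial_order m mord"
    and "groebner_basis m mord (g ` {..<m}) (lift_code m l C)"
    and "groebner_basis m mord (h ` {..<m}) (lift_code m l (dual_code m l C))"
    and "i < m" and "j < m"
  shows "scal m l (proj m l (g i)) (proj m l (h j)) = 0
       \<and> scal m l (proj m l (h j)) (proj m l (g i)) = 0"
proof -
  have "proj m l (g i) \<in> C"
    using assms(3,5) unfolding groebner_basis_def lift_code_def by auto
  moreover have "proj m l (h j) \<in> dual_code m l C"
    using assms(4,6) unfolding groebner_basis_def lift_code_def by auto
  ultimately show ?thesis
    using GQC_scal_dual_eq_0[OF assms(1)] by blast
qed

end
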